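(* Let $Z$ have a continuous distribution with density $f$ and finite expectation, and run GBPA with the stochastically smoothed potential $\tilde\Phi$ with perturbation $Z$ on a gain sequence $g_1,\dots,g_T\in[-1,0]^N$. For each round $t$, with $p_t = \nabla\tilde\Phi(\hat G_{t-1})$, $\operatorname{supp}(p_t)=\{i : p_{t,i}>0\}$, and $\hat L_{-i} = \max_{j\ne i}(\hat G_{t-1,j} + Z_j)$ (with $Z_1,\dots,Z_N$ i.i.d. copies of $Z$), $$\mathbb{E}\big[D_{\tilde\Phi}(\hat G_t,\hat G_{t-1}) \,\big|\, i_1,\dots,i_{t-1}\big] = \sum_{i\in\operatorname{supp}(p_t)} p_{t,i}\int_0^{|g_{t,i}/p_{t,i}|} \mathbb{E}_{\hat L_{-i}}\Big[\int_0^s f(\hat L_{-i} - \hat G_{t-1,i} + r)\,dr\Big]\,ds.$$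
   Context: Adversarial multi-armed bandit: $N$ arms, $T$ rounds; an oblivious adversary fixes $g_1,\dots,g_T \in [-1,0]^N$ in advance. The stochastically smoothed potential is $\tilde\Phi(G) = \mathbb{E}[\max_{i}(G_i + Z_i)]$ for $G\in\mathbb{R}^N$; it is convex and differentiable with $\nabla_i\tilde\Phi(G) = \mathbb{P}(i = \arg\max_j (G_j+Z_j))$. GBPA$(\tilde\Phi)$: $\hat G_0 = 0$; for $t=1,\dots,T$: $p_t = \nabla\tilde\Phi(\hat G_{t-1})$, draw $i_t \sim p_t$, observe only $g_{t,i_t}$, set $\hat g_t = \frac{g_{t,i_t}}{p_{t,i_t}} e_{i_t}$, $\hat G_t = \hat G_{t-1} + \hat g_t$. Bregman divergence: $D_{\tilde\Phi}(x,y) = \tilde\Phi(x)-\tilde\Phi(y)-\langle\nabla\tilde\Phi(y), x-y\rangle$. *)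

theory Defs
  imports "HOL-Probability.Probability"
begin

text \<open>Arms are indexed by 0..N-1; vectors in R^N are functions nat => real
  (only coordinates below N matter). Rounds are indexed 1..T.\<close>

definition Zdist :: "nat \<Rightarrow> (real \<Rightarrow> real) \<Rightarrow> (nat \<Rightarrow> real) measure" where
  "Zdist N f = PiM {..<N} (\<lambda>_. density lborel (\<lambda>x. ennreal (f x)))"

definition Phi :: "nat \<Rightarrow> (real \<Rightarrow> real) \<Rightarrow> (nat \<Rightarrow> real) \<Rightarrow> real" where
  "Phi N f G = (\<integral>z. Max ((\<lambda>j. G j + z j) ` {..<N}) \<partial>Zdist N f)"

definition gradPhi :: "nat \<Rightarrow> (real \<Rightarrow> real) \<Rightarrow> (nat \<Rightarrow> real) \<Rightarrow> nat \<Rightarrow> real" where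
  "gradPhi N f G i = deriv (\<lambda>x. Phi N f (G(i := x))) (G i)"

definition Breg :: "nat \<Rightarrow> (real \<Rightarrow> real) \<Rightarrow> (nat \<Rightarrow> real) \<Rightarrow> (nat \<Rightarrow> real) \<Rightarrow> real" where
  "Breg N f x y = Phi N f x - Phi N f y - (\<Sum>j<N. gradPhi N f y j * (x j - y j))"

definition gbpa_step :: "nat \<Rightarrow> (real \<Rightarrow> real) \<Rightarrow> (nat \<Rightarrow> nat \<Rightarrow> real) \<Rightarrow> nat
    \<Rightarrow> (nat \<Rightarrow> real) \<Rightarrow> nat \<Rightarrow> (nat \<Rightarrow> real)" where
  "gbpa_step N f g t G i = G(i := G i + g t i / gradPhi N f G i)"

fun Ghat_aux :: "nat \<Rightarrow> (real \<Rightarrow> real) \<Rightarrow> (nat \<Rightarrow> nat \<Rightarrow> real) \<Rightarrow> nat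
    \<Rightarrow> nat list \<Rightarrow> (nat \<Rightarrow> real) \<Rightarrow> (nat \<Rightarrow> real)" where
  "Ghat_aux N f g t [] G = G"
| "Ghat_aux N f g t (i # is) G = Ghat_aux N f g (Suc t) is (gbpa_step N f g t G i)"

text \<open>Cumulative estimated gain after the history i_1,...,i_k of drawn arms (starting from 0).\<close>
definition Ghat :: "nat \<Rightarrow> (real \<Rightarrow> real) \<Rightarrow> (nat \<Rightarrow> nat \<Rightarrow> real) \<Rightarrow> nat list \<Rightarrow> (nat \<Rightarrow> real)" where
  "Ghat N f g hist = Ghat_aux N f g 1 hist (\<lambda>_. 0)"

definition Lminus :: "nat \<Rightarrow> (nat \<Rightarrow> real) \<Rightarrow> nat \<Rightarrow> (nat \<Rightarrow> real) \<Rightarrow> real" where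
  "Lminus N G i z = Max ((\<lambda>j. G j + z j) ` ({..<N} - {i}))"

end

theory Submission
  imports Defs
begin

text \<open>Fix an arm i and let L be the maximum of G_j + Z_j over the other arms. Then
  Phi(G(i := u)) = E[max (u + Z_i) L] with Z_i independent of L, so for D = G_i + Z_i - L the
  partial derivative is P(D > 0): ties have probability zero because Z_i has a density.
  Lowering the i-th coordinate by a >= 0, the Bregman divergence becomes
  E[max (D - a) 0 - max D 0 + a [D > 0]], and pointwise this is the integral over s in (0, a)
  of [0 < D < s]. By Fubini the divergence is the integral over (0, a) of P(0 < D < s), and
  integrating out Z_i first gives P(0 < D < s) = E[integral over r in (0, s) of f(L - G_i + r)].\<close>

lemma max_shift_diff_eq_interval_integral:
  fixes a d :: real
  assumes a: "0 \<le> a"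
  shows "max (d - a) 0 - max d 0 + a * of_bool (0 < d) = (LBINT s=0..a. of_bool (0 < d \<and> d < s))"
proof -
  have "(LBINT s=0..a. of_bool (0 < d \<and> d < s)) = (\<integral>s. indicator {0<..<a} s * of_bool (0 < d \<and> d < s) \<partial>lborel :: real)"
    using a by (simp add: interval_integral_Ioo set_lebesgue_integral_def)
  also have "\<dots> = (if 0 < d \<and> d < a then a - d else 0)"
  proof (cases "0 < d \<and> d < a")
    case True
    then have "(\<lambda>s. indicator {0<..<a} s * of_bool (0 < d \<and> d < s)) = (indicator {d<..<a} :: real \<Rightarrow> real)"
      by (auto simp: indicator_def fun_eq_iff)
    then show ?thesis using True by simp
  next
    case False
    then have "(\<lambda>s. indicator {0<..<a} s * of_bool (0 < d \<and> d < s)) = (\<lambda>_. 0 :: real)"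
      by (auto simp: indicator_def fun_eq_iff)
    then show ?thesis using False by simp
  qed
  finally show ?thesis using a by auto
qed

lemma interval_integral_shift_eq_measure_density:
  fixes f :: "real \<Rightarrow> real"
  assumes [measurable]: "f \<in> borel_measurable borel" and f_nonneg: "\<And>x. 0 \<le> f x" and s: "0 \<le> s"
  shows "(LBINT r=0..s. f (c + r)) = measure (density lborel (\<lambda>x. ennreal (f x))) {c<..<c + s}"
proof -
  have "(LBINT r=0..s. f (c + r)) = (\<integral>r. indicator {c<..<c + s} (c + r) * f (c + r) \<partial>lborel)"
    using s by (auto simp: interval_integral_Ioo set_lebesgue_integral_def indicator_def
        intro!: Bochner_Integration.integral_cong)
  also have "\<dots> = (\<integral>x. indicator {c<..<c + s} x * f x \<partial>distr lborel borel ((+) c))"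
    by (rule integral_distr[symmetric]) auto
  also have "\<dots> = (\<integral>x. f x *\<^sub>R indicator {c<..<c + s} x \<partial>lborel)"
    by (simp add: lborel_distr_plus mult.commute)
  also have "\<dots> = (\<integral>x. indicator {c<..<c + s} x \<partial>density lborel (\<lambda>x. ennreal (f x)))"
    by (rule integral_density[symmetric]) (auto simp: f_nonneg)
  finally show ?thesis by simp
qed

lemma borel_measurable_measure_Ioo_shift:
  fixes M :: "real measure"
  assumes "finite_measure M" and sets_M: "sets M = sets borel" and s: "0 < s"
  shows "(\<lambda>c. measure M {c<..<c + s}) \<in> borel_measurable borel"
proof -
  interpret finite_measure M by fact
  have [measurable]: "(\<lambda>t. measure M {..<t}) \<in> borel_measurable borel" "(\<lambda>t. measure M {..t}) \<in> borel_measurable borel"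
    using sets_M by (auto intro!: borel_measurable_mono finite_measure_mono simp: mono_def)
  have "{c<..<c + s} = {..<c + s} - {..c}" "{..c} \<subseteq> {..<c + s}" for c
    using s by auto
  then have "measure M {c<..<c + s} = measure M {..<c + s} - measure M {..c}" for c
    using sets_M by (simp add: finite_measure_Diff)
  then show ?thesis by simp
qed

lemma emeasure_density_lborel_singleton:
  fixes f :: "real \<Rightarrow> real"
  assumes "f \<in> borel_measurable borel"
  shows "emeasure (density lborel (\<lambda>x. ennreal (f x))) {c} = 0"
proof -
  have "AE x in lborel. x \<in> {c} \<longrightarrow> ennreal (f x) = 0"
    using AE_lborel_singleton[of c] by eventually_elim auto
  then have "{c} \<in> null_sets (density lborel (\<lambda>x. ennreal (f x)))"
    using assms by (subst null_sets_density_iff) auto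
  then show ?thesis by (rule null_setsD1)
qed

context prob_space
begin

lemma expectation_of_bool_eq_prob:
  assumes "{w \<in> space M. P w} \<in> events"
  shows "expectation (\<lambda>w. of_bool (P w)) = prob {w \<in> space M. P w}"
proof -
  have "expectation (\<lambda>w. of_bool (P w)) = expectation (indicator {w \<in> space M. P w})"
    by (intro Bochner_Integration.integral_cong) (auto simp: indicator_def)
  also have "\<dots> = prob {w \<in> space M. P w}"
    by (subst Bochner_Integration.integral_indicator) (simp add: Int_absorb2)
  finally show ?thesis .
qed

lemma has_field_derivative_expectation_max:
  fixes X Y :: "'a \<Rightarrow> real"
  assumes X: "integrable M X" and Y: "integrable M Y" and no_tie: "AE w in M. u + X w \<noteq> Y w"
  shows "((\<lambda>v. expectation (\<lambda>w. max (v + X w) (Y w))) has_field_derivative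
           prob {w \<in> space M. Y w < u + X w}) (at u)"
  unfolding has_field_derivative_iff tendsto_at_iff_sequentially comp_def
proof (intro allI impI)
  fix v :: "nat \<Rightarrow> real"
  assume v_ne: "\<forall>n. v n \<in> UNIV - {u}" and v: "v \<longlonglongrightarrow> u"
  have [measurable]: "X \<in> borel_measurable M" "Y \<in> borel_measurable M"
    using X Y by auto
  define q where "q n w = (max (v n + X w) (Y w) - max (u + X w) (Y w)) / (v n - u)" for n w
  have quotient_eq: "(expectation (\<lambda>w. max (v n + X w) (Y w)) - expectation (\<lambda>w. max (u + X w) (Y w))) / (v n - u)
      = expectation (q n)" for n
    unfolding q_def using X Y by (simp add: Bochner_Integration.integral_diff)
  have "(\<lambda>n. expectation (q n)) \<longlonglongrightarrow> expectation (\<lambda>w. of_bool (Y w < u + X w))"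
  proof (rule integral_dominated_convergence[where w="\<lambda>_. 1"])
    show "q n \<in> borel_measurable M" for n
      unfolding q_def by measurable
    show "AE w in M. norm (q n w) \<le> 1" for n
    proof (rule AE_I2)
      fix w
      have "\<bar>max (v n + X w) (Y w) - max (u + X w) (Y w)\<bar> \<le> \<bar>v n - u\<bar>"
        by (auto simp: max_def abs_if)
      then show "norm (q n w) \<le> 1"
        using v_ne by (simp add: q_def abs_divide divide_le_eq_1)
    qed
    show "AE w in M. (\<lambda>n. q n w) \<longlonglongrightarrow> of_bool (Y w < u + X w)"
      using no_tie
    proof eventually_elim
      fix w assume tie_free: "u + X w \<noteq> Y w"
      have "\<forall>\<^sub>F n in sequentially. dist (v n) u < \<bar>u + X w - Y w\<bar>"
        using v tie_free by (intro tendstoD) auto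
      then have "\<forall>\<^sub>F n in sequentially. q n w = of_bool (Y w < u + X w)"
      proof eventually_elim
        case (elim n)
        \<comment> \<open>near u the maximum is attained by the same argument as at u\<close>
        then show ?case
          using v_ne tie_free by (auto simp: q_def dist_real_def max_def)
      qed
      then show "(\<lambda>n. q n w) \<longlonglongrightarrow> of_bool (Y w < u + X w)"
        by (rule Lim_transform_eventually[OF tendsto_const, OF eventually_mono]) auto
    qed
  qed auto
  moreover have "expectation (\<lambda>w. of_bool (Y w < u + X w)) = prob {w \<in> space M. Y w < u + X w}"
    by (rule expectation_of_bool_eq_prob) measurable
  ultimately show "(\<lambda>n. (expectation (\<lambda>w. max (v n + X w) (Y w)) - expectation (\<lambda>w. max (u + X w) (Y w))) / (v n - u))
      \<longlonglongrightarrow> prob {w \<in> space M. Y w < u + X w}"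
    unfolding quotient_eq by simp
qed

lemma expectation_interval_integral_swap:
  fixes F :: "real \<Rightarrow> 'a \<Rightarrow> real" and a :: real
  assumes a: "0 \<le> a" and F[measurable]: "(\<lambda>(s, w). F s w) \<in> borel_measurable (lborel \<Otimes>\<^sub>M M)"
    and bounded: "\<And>s w. \<bar>F s w\<bar> \<le> B"
  shows "expectation (\<lambda>w. LBINT s=0..a. F s w) = (LBINT s=0..a. expectation (F s))"
proof -
  interpret pair_sigma_finite lborel M
    by (simp add: pair_sigma_finite_def lborel.sigma_finite_measure_axioms sigma_finite_measure_axioms)
  define H where "H s w = indicator {0<..<a} s * F s w" for s w
  have [measurable]: "(\<lambda>(s, w). H s w) \<in> borel_measurable (lborel \<Otimes>\<^sub>M M)"
    unfolding H_def by measurable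
  have [measurable]: "F s \<in> borel_measurable M" for s
    by measurable
  have B: "0 \<le> B"
    using bounded[of 0 undefined] by linarith
  have section_bound: "(\<integral>w. norm (H s w) \<partial>M) \<le> B * indicator {0<..<a} s" for s
  proof -
    have "(\<integral>w. norm (F s w) \<partial>M) \<le> (\<integral>w. B \<partial>M)"
      using bounded B by (intro integral_mono integrable_const_bound[where B=B]) auto
    then show ?thesis
      by (simp add: H_def abs_mult indicator_def prob_space)
  qed
  have "integrable lborel (\<lambda>s. \<integral>w. norm (H s w) \<partial>M)"
  proof (rule Bochner_Integration.integrable_bound[where f="\<lambda>s. B * indicator {0<..<a} s"])
    show "integrable lborel (\<lambda>s. B * indicator {0<..<a} s :: real)"
      using a by (intro integrable_mult_right integrable_real_indicator) (auto simp: emeasure_lborel_Ioo)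
    show "AE s in lborel. norm (\<integral>w. norm (H s w) \<partial>M) \<le> norm (B * indicator {0<..<a} s)"
      using section_bound B by (intro AE_I2) (simp add: integral_nonneg abs_mult)
  qed measurable
  moreover have "integrable M (H s)" for s
    using bounded B by (intro integrable_const_bound[where B=B]) (auto simp: H_def indicator_def)
  ultimately have "integrable (lborel \<Otimes>\<^sub>M M) (\<lambda>(s, w). H s w)"
    by (intro Fubini_integrable) auto
  then have "(\<integral>w. (\<integral>s. H s w \<partial>lborel) \<partial>M) = (\<integral>s. (\<integral>w. H s w \<partial>M) \<partial>lborel)"
    by (rule Fubini_integral)
  then show ?thesis
    using a by (simp add: interval_integral_Ioo set_lebesgue_integral_def H_def)
qed

lemma expectation_max_shift_diff:
  fixes X Y :: "'a \<Rightarrow> real"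
  assumes X: "integrable M X" and Y: "integrable M Y" and a: "0 \<le> a"
  shows "expectation (\<lambda>w. max (u - a + X w) (Y w)) - expectation (\<lambda>w. max (u + X w) (Y w))
           + a * prob {w \<in> space M. Y w < u + X w}
         = (LBINT s=0..a. prob {w \<in> space M. 0 < u + X w - Y w \<and> u + X w - Y w < s})"
proof -
  have [measurable]: "X \<in> borel_measurable M" "Y \<in> borel_measurable M"
    using X Y by auto
  define D where "D w = u + X w - Y w" for w
  have [measurable]: "D \<in> borel_measurable M"
    unfolding D_def by measurable
  have "prob {w \<in> space M. Y w < u + X w} = expectation (\<lambda>w. of_bool (Y w < u + X w))"
    by (rule expectation_of_bool_eq_prob[symmetric]) measurable
  moreover have "integrable M (\<lambda>w. of_bool (Y w < u + X w) :: real)"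
    by (rule integrable_const_bound[where B=1]) auto
  ultimately have "expectation (\<lambda>w. max (u - a + X w) (Y w)) - expectation (\<lambda>w. max (u + X w) (Y w))
           + a * prob {w \<in> space M. Y w < u + X w}
      = expectation (\<lambda>w. max (u - a + X w) (Y w) - max (u + X w) (Y w) + a * of_bool (Y w < u + X w))"
    using X Y by simp
  also have "\<dots> = expectation (\<lambda>w. LBINT s=0..a. of_bool (0 < D w \<and> D w < s))"
  proof (intro Bochner_Integration.integral_cong refl)
    fix w
    have "max (u - a + X w) (Y w) - max (u + X w) (Y w) = max (D w - a) 0 - max (D w) 0"
      unfolding D_def by (simp add: max_def)
    then show "max (u - a + X w) (Y w) - max (u + X w) (Y w) + a * of_bool (Y w < u + X w)
        = (LBINT s=0..a. of_bool (0 < D w \<and> D w < s))"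
      unfolding max_shift_diff_eq_interval_integral[OF a, symmetric] by (simp add: D_def)
  qed
  also have "\<dots> = (LBINT s=0..a. expectation (\<lambda>w. of_bool (0 < D w \<and> D w < s)))"
    by (rule expectation_interval_integral_swap[OF a, where B=1]) auto
  also have "\<dots> = (LBINT s=0..a. prob {w \<in> space M. 0 < u + X w - Y w \<and> u + X w - Y w < s})"
    unfolding D_def by (intro interval_integral_cong expectation_of_bool_eq_prob) measurable
  finally show ?thesis .
qed

end

locale gbpa_arm =
  fixes N :: nat and f :: "real \<Rightarrow> real" and G :: "nat \<Rightarrow> real" and i :: nat
  assumes two_arms: "2 \<le> N" and arm: "i < N"
    and f_meas[measurable]: "f \<in> borel_measurable borel"
    and f_nonneg: "\<And>x. 0 \<le> f x"
    and f_prob: "prob_space (density lborel (\<lambda>x. ennreal (f x)))"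
    and f_mean: "integrable (density lborel (\<lambda>x. ennreal (f x))) (\<lambda>x. x)"
begin

abbreviation "M \<equiv> density lborel (\<lambda>x. ennreal (f x))"
abbreviation "L \<equiv> Lminus N G i"

sublocale Z: prob_space "Zdist N f"
  unfolding Zdist_def by (rule prob_space_PiM) (rule f_prob)

interpretation M: prob_space M
  by (rule f_prob)

interpretation product_sigma_finite "\<lambda>_. M"
  unfolding product_sigma_finite_def using f_prob prob_space_imp_sigma_finite by blast

lemma Zdist_eq_PiM_insert_arm: "Zdist N f = PiM (insert i ({..<N} - {i})) (\<lambda>_. M)"
  using arm by (simp add: Zdist_def insert_absorb)

lemma measurable_coordinate[measurable]: "j < N \<Longrightarrow> (\<lambda>w. w j) \<in> borel_measurable (Zdist N f)"
  unfolding Zdist_def by measurable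

lemmas measurable_arm_coordinate[measurable] = measurable_coordinate[OF arm]

lemma measurable_Lminus[measurable]: "L \<in> borel_measurable (Zdist N f)"
  unfolding Lminus_def by measurable

lemma integrable_coordinate:
  assumes j: "j < N"
  shows "integrable (Zdist N f) (\<lambda>w. w j)"
proof -
  have "integrable (Zdist N f) (\<lambda>w. \<Prod>k<N. if k = j then w k else 1)"
    unfolding Zdist_def
  proof (intro product_integrable_prod)
    show "integrable M (\<lambda>x. if k = j then x else 1)" for k
      using f_mean by (cases "k = j") auto
  qed auto
  then show ?thesis
    using j by (simp add: prod.delta)
qed

lemma other_arm_exists: "{..<N} - {i} \<noteq> {}"
proof -
  have "(if i = 0 then 1 else 0) \<in> {..<N} - {i}"
    using two_arms by auto
  then show ?thesis
    by blast
qed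

lemma integrable_Lminus: "integrable (Zdist N f) L"
proof (rule Bochner_Integration.integrable_bound)
  show "integrable (Zdist N f) (\<lambda>w. \<Sum>j<N. \<bar>G j + w j\<bar>)"
    by (intro Bochner_Integration.integrable_sum Bochner_Integration.integrable_abs
        Bochner_Integration.integrable_add integrable_coordinate) auto
  show "AE w in Zdist N f. norm (L w) \<le> norm (\<Sum>j<N. \<bar>G j + w j\<bar>)"
  proof (rule AE_I2)
    fix w
    have "L w \<in> (\<lambda>j. G j + w j) ` ({..<N} - {i})"
      unfolding Lminus_def using other_arm_exists by (intro Max_in) auto
    then obtain k where k: "k < N" "L w = G k + w k"
      by auto
    have "\<bar>G k + w k\<bar> \<le> (\<Sum>j<N. \<bar>G j + w j\<bar>)"
      using k(1) by (intro member_le_sum) auto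
    then show "norm (L w) \<le> norm (\<Sum>j<N. \<bar>G j + w j\<bar>)"
      using k(2) by simp
  qed
qed measurable

lemma integral_Zdist_split_arm:
  fixes F :: "(nat \<Rightarrow> real) \<Rightarrow> real"
  assumes "integrable (Zdist N f) F"
  shows "Z.expectation F = (\<integral>x. (\<integral>y. F (x(i := y)) \<partial>M) \<partial>PiM ({..<N} - {i}) (\<lambda>_. M))"
proof -
  have F: "integrable (PiM (insert i ({..<N} - {i})) (\<lambda>_. M)) F"
    using assms by (simp only: Zdist_eq_PiM_insert_arm)
  show ?thesis
    unfolding Zdist_eq_PiM_insert_arm using F by (rule product_integral_insert[rotated 2]) auto
qed

lemma nn_integral_Zdist_split_arm:
  assumes "F \<in> borel_measurable (Zdist N f)"
  shows "(\<integral>\<^sup>+w. F w \<partial>Zdist N f) = (\<integral>\<^sup>+x. (\<integral>\<^sup>+y. F (x(i := y)) \<partial>M) \<partial>PiM ({..<N} - {i}) (\<lambda>_. M))"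
proof -
  have F: "F \<in> borel_measurable (PiM (insert i ({..<N} - {i})) (\<lambda>_. M))"
    using assms by (simp only: Zdist_eq_PiM_insert_arm)
  show ?thesis
    unfolding Zdist_eq_PiM_insert_arm using F by (rule product_nn_integral_insert[rotated 2]) auto
qed

lemma Lminus_fun_upd_arm: "L (w(i := y)) = L w"
  unfolding Lminus_def by (intro arg_cong[where f=Max] image_cong) auto

lemma Phi_fun_upd_arm: "Phi N f (G(i := u)) = Z.expectation (\<lambda>w. max (u + w i) (L w))"
proof -
  have "(\<lambda>j. (G(i := u)) j + w j) ` {..<N} = insert (u + w i) ((\<lambda>j. G j + w j) ` ({..<N} - {i}))" for w
    using arm by auto
  then show ?thesis
    unfolding Phi_def Lminus_def using other_arm_exists by (simp add: Max_insert)
qed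

lemma AE_arm_neq_Lminus: "AE w in Zdist N f. G i + w i \<noteq> L w"
proof -
  let ?tie = "{w \<in> space (Zdist N f). G i + w i = L w}"
  have tie_set[measurable]: "?tie \<in> sets (Zdist N f)"
    by measurable
  have "emeasure (Zdist N f) ?tie = (\<integral>\<^sup>+ w. indicator ?tie w \<partial>Zdist N f)"
    by (simp add: nn_integral_indicator)
  also have "\<dots> = (\<integral>\<^sup>+ x. (\<integral>\<^sup>+ y. indicator ?tie (x(i := y)) \<partial>M) \<partial>PiM ({..<N} - {i}) (\<lambda>_. M))"
    by (rule nn_integral_Zdist_split_arm) measurable
  also have "\<dots> = (\<integral>\<^sup>+ x. emeasure M {L x - G i} \<partial>PiM ({..<N} - {i}) (\<lambda>_. M))"
    using arm
    by (intro nn_integral_cong)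
      (auto simp: Lminus_fun_upd_arm indicator_def Zdist_def space_PiM PiE_iff extensional_def
        simp flip: nn_integral_indicator intro!: nn_integral_cong)
  finally show ?thesis
    by (subst AE_iff_measurable[OF tie_set]) (auto simp: emeasure_density_lborel_singleton)
qed

lemma gradPhi_eq_prob: "gradPhi N f G i = Z.prob {w \<in> space (Zdist N f). L w < G i + w i}"
proof -
  have "((\<lambda>u. Phi N f (G(i := u))) has_field_derivative Z.prob {w \<in> space (Zdist N f). L w < G i + w i}) (at (G i))"
    unfolding Phi_fun_upd_arm
    by (rule Z.has_field_derivative_expectation_max[OF integrable_coordinate[OF arm] integrable_Lminus AE_arm_neq_Lminus])
  then show ?thesis
    unfolding gradPhi_def by (rule DERIV_imp_deriv)
qed

lemma prob_gap_eq_expectation_interval_integral: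
  assumes s: "0 < s"
  shows "Z.prob {w \<in> space (Zdist N f). 0 < G i + w i - L w \<and> G i + w i - L w < s}
       = Z.expectation (\<lambda>w. LBINT r=0..s. f (L w - G i + r))"
proof -
  let ?gap = "\<lambda>w. measure M {L w - G i<..<L w - G i + s}"
  let ?J = "PiM ({..<N} - {i}) (\<lambda>_. M)"
  have [measurable]: "?gap \<in> borel_measurable (Zdist N f)"
    using s M.finite_measure_axioms
    by (intro measurable_compose[OF _ borel_measurable_measure_Ioo_shift]) auto
  have "Z.prob {w \<in> space (Zdist N f). 0 < G i + w i - L w \<and> G i + w i - L w < s}
      = Z.expectation (indicator {w. 0 < G i + w i - L w \<and> G i + w i - L w < s})"
    by (simp add: Collect_conj_eq Int_commute)
  also have "\<dots> = (\<integral>x. (\<integral>y. indicator {w. 0 < G i + w i - L w \<and> G i + w i - L w < s} (x(i := y)) \<partial>M) \<partial>?J)"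
    by (rule integral_Zdist_split_arm) (auto intro!: Z.integrable_const_bound[where B=1])
  also have "\<dots> = (\<integral>x. ?gap x \<partial>?J)"
  proof -
    have "(\<lambda>y. indicator {w. 0 < G i + w i - L w \<and> G i + w i - L w < s} (x(i := y)) :: real)
        = indicator {L x - G i<..<L x - G i + s}" for x
      by (auto simp: fun_eq_iff indicator_def Lminus_fun_upd_arm)
    then show ?thesis
      by simp
  qed
  also have "\<dots> = (\<integral>x. (\<integral>y. ?gap (x(i := y)) \<partial>M) \<partial>?J)"
    using M.prob_space by (simp add: Lminus_fun_upd_arm)
  also have "\<dots> = Z.expectation ?gap"
    by (rule integral_Zdist_split_arm[symmetric]) (auto intro!: Z.integrable_const_bound[where B=1])
  also have "\<dots> = Z.expectation (\<lambda>w. LBINT r=0..s. f (L w - G i + r))"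
    using s by (simp add: interval_integral_shift_eq_measure_density f_nonneg)
  finally show ?thesis .
qed

lemma Breg_fun_upd_arm:
  assumes a: "0 \<le> a"
  shows "Breg N f (G(i := G i - a)) G = (LBINT s=0..a. Z.expectation (\<lambda>w. LBINT r=0..s. f (L w - G i + r)))"
proof -
  have "(\<Sum>j<N. gradPhi N f G j * ((G(i := G i - a)) j - G j)) = (\<Sum>j<N. if j = i then - a * gradPhi N f G i else 0)"
    by (intro sum.cong) auto
  also have "\<dots> = - a * gradPhi N f G i"
    using arm by simp
  finally have linear_term: "(\<Sum>j<N. gradPhi N f G j * ((G(i := G i - a)) j - G j)) = - a * gradPhi N f G i" .
  have "Breg N f (G(i := G i - a)) G
      = Z.expectation (\<lambda>w. max (G i - a + w i) (L w)) - Z.expectation (\<lambda>w. max (G i + w i) (L w))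
        + a * Z.prob {w \<in> space (Zdist N f). L w < G i + w i}"
    unfolding Breg_def linear_term gradPhi_eq_prob Phi_fun_upd_arm[symmetric] by simp
  also have "\<dots> = (LBINT s=0..a. Z.prob {w \<in> space (Zdist N f). 0 < G i + w i - L w \<and> G i + w i - L w < s})"
    by (rule Z.expectation_max_shift_diff[OF integrable_coordinate[OF arm] integrable_Lminus a])
  also have "\<dots> = (LBINT s=0..a. Z.expectation (\<lambda>w. LBINT r=0..s. f (L w - G i + r)))"
    using a by (intro interval_integral_cong prob_gap_eq_expectation_interval_integral) (auto simp: einterval_iff)
  finally show ?thesis .
qed

end

theorem lemma3:
  fixes N T t :: nat and f :: "real \<Rightarrow> real" and g :: "nat \<Rightarrow> nat \<Rightarrow> real"
    and hist :: "nat list"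
  assumes N2: "N \<ge> 2"
    and f_meas: "f \<in> borel_measurable borel"
    and f_nonneg: "\<And>x. f x \<ge> 0"
    and f_prob: "prob_space (density lborel (\<lambda>x. ennreal (f x)))"
    and Z_finite_mean: "integrable (density lborel (\<lambda>x. ennreal (f x))) (\<lambda>x. x)"
    and gains: "\<And>s i. 1 \<le> s \<Longrightarrow> s \<le> T \<Longrightarrow> i < N \<Longrightarrow> -1 \<le> g s i \<and> g s i \<le> 0"
    and t_range: "1 \<le> t" "t \<le> T"
    and hist_len: "length hist = t - 1"
    and hist_arms: "\<forall>k < length hist. hist ! k < N"
    and hist_pos: "\<forall>k < length hist. gradPhi N f (Ghat N f g (take k hist)) (hist ! k) > 0"
  shows "(let G = Ghat N f g hist; p = gradPhi N f G in
           (\<Sum>i<N. p i * Breg N f (gbpa_step N f g t G i) G)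
         = (\<Sum>i\<in>{i. i < N \<and> p i > 0}. p i *
              (LBINT s=0..\<bar>g t i / p i\<bar>.
                 (\<integral>z. (LBINT r=0..s. f (Lminus N G i z - G i + r)) \<partial>Zdist N f))))"
proof -
  \<comment> \<open>The identity holds for every G.\<close>
  define G where "G = Ghat N f g hist"
  define p where "p = gradPhi N f G"
  have arm: "gbpa_arm N f i" if "i < N" for i
    by (rule gbpa_arm.intro[OF N2 that f_meas f_nonneg f_prob Z_finite_mean])
  have p_nonneg: "0 \<le> p i" if "i < N" for i
    unfolding p_def gbpa_arm.gradPhi_eq_prob[OF arm[OF that]] by simp
  have Breg_step: "Breg N f (gbpa_step N f g t G i) G
      = (LBINT s=0..\<bar>g t i / p i\<bar>. (\<integral>z. (LBINT r=0..s. f (Lminus N G i z - G i + r)) \<partial>Zdist N f))"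
    if "i < N" "0 < p i" for i
  proof -
    have "g t i / p i \<le> 0"
      using gains[OF t_range that(1)] that(2) by (simp add: divide_nonpos_pos)
    then have "gbpa_step N f g t G i = G(i := G i - \<bar>g t i / p i\<bar>)"
      unfolding gbpa_step_def p_def[symmetric] by (simp only: abs_of_nonpos diff_minus_eq_add)
    then show ?thesis
      by (simp add: gbpa_arm.Breg_fun_upd_arm[OF arm[OF that(1)]])
  qed
  have "(\<Sum>i<N. p i * Breg N f (gbpa_step N f g t G i) G)
      = (\<Sum>i\<in>{i. i < N \<and> p i > 0}. p i * Breg N f (gbpa_step N f g t G i) G)"
    using p_nonneg by (intro sum.mono_neutral_right) (auto simp: order_less_le)
  also have "\<dots> = (\<Sum>i\<in>{i. i < N \<and> p i > 0}. p i *
      (LBINT s=0..\<bar>g t i / p i\<bar>. (\<integral>z. (LBINT r=0..s. f (Lminus N G i z - G i + r)) \<partial>Zdist N f)))"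
    by (intro sum.cong) (auto simp: Breg_step)
  finally show ?thesis
    unfolding Let_def G_def p_def .
qed

end
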